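(* Let $q\ge 2$. The class of rational subsets of $\mathrm{BS}(1,q)$ is not closed under intersection: there exist rational subsets $R_1,R_2\subseteq\mathrm{BS}(1,q)$ such that $R_1\cap R_2$ is not rational.
   Context: $\mathrm{BS}(1,q)$ is identified with $\mathbb{Z}[\tfrac1q]\rtimes\mathbb{Z}$ with $(r,m)(r',m')=(r+q^m r',m+m')$ and generators $a=(1,0)$, $t=(0,1)$. A subset is rational if it is accepted by a finite automaton whose edges are labelled by $a^{\pm1},t^{\pm1}$, i.e. it is the set of products of edge labels along runs from an initial to a final state. *)

theory Defs
  imports Complex_Main
begin

text \<open>BS(1,q) realised as Z[1/q] \<rtimes> Z, with Z[1/q] a subring of the rationals.
  An element is a pair (r, m) with r :: rat in Z[1/q] and m :: int.\<close>

definition Zq :: "int \<Rightarrow> rat set" where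
  "Zq q = {r. \<exists>k::nat. r * of_int q ^ k \<in> \<int>}"

definition BS_carrier :: "int \<Rightarrow> (rat \<times> int) set" where
  "BS_carrier q = Zq q \<times> UNIV"

definition bs_mult :: "int \<Rightarrow> rat \<times> int \<Rightarrow> rat \<times> int \<Rightarrow> rat \<times> int" where
  "bs_mult q x y = (fst x + (of_int q) powi (snd x) * fst y, snd x + snd y)"

datatype gen = GA | GAinv | GT | GTinv

fun gen_val :: "gen \<Rightarrow> rat \<times> int" where
  "gen_val GA = (1, 0)"
| "gen_val GAinv = (-1, 0)"
| "gen_val GT = (0, 1)"
| "gen_val GTinv = (0, -1)"

fun word_eval :: "int \<Rightarrow> gen list \<Rightarrow> rat \<times> int" where
  "word_eval q [] = (0, 0)"
| "word_eval q (x # w) = bs_mult q (gen_val x) (word_eval q w)"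

inductive run :: "(nat \<times> gen \<times> nat) set \<Rightarrow> nat \<Rightarrow> gen list \<Rightarrow> nat \<Rightarrow> bool"
  for delta where
  run_nil: "run delta p [] p"
| run_cons: "(p, x, p') \<in> delta \<Longrightarrow> run delta p' w p'' \<Longrightarrow> run delta p (x # w) p''"

definition rational_subset :: "int \<Rightarrow> (rat \<times> int) set \<Rightarrow> bool" where
  "rational_subset q R \<longleftrightarrow>
     (\<exists>delta I F. finite delta \<and> finite I \<and> finite F \<and>
        R = {word_eval q w | w. \<exists>i\<in>I. \<exists>f\<in>F. run delta i w f})"

end

theory Submission
  imports Defs
begin

text \<open>Take \<open>R1 = {t^n a t^-m}\<close> and \<open>R2 = {a^k}\<close>; both are rational and
  \<open>R1 \<inter> R2 = {a^(q^n)}\<close>. If an automaton accepted the latter, pumping a loop \<open>v\<close> in an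
  accepted word \<open>u v x\<close> would give elements \<open>g h, g y h, g y^2 h\<close> of it; their first
  coordinates are three powers of \<open>q\<close> in arithmetic progression, which forces \<open>y = 1\<close>.
  So every loop can be cut out without changing the value, every element is the value of a word of
  length at most the number of states, and the infinite set would be finite.\<close>

lemma bs_mult_assoc:
  assumes "q \<noteq> 0"
  shows "bs_mult q x (bs_mult q y z) = bs_mult q (bs_mult q x y) z"
  using assms by (simp add: bs_mult_def power_int_add algebra_simps)

lemma bs_mult_unit_left [simp]: "bs_mult q (0, 0) x = x"
  by (simp add: bs_mult_def)

lemma word_eval_append:
  assumes "q \<noteq> 0"
  shows "word_eval q (u @ w) = bs_mult q (word_eval q u) (word_eval q w)"
  by (induction u) (simp_all add: bs_mult_assoc[OF assms])

lemma finite_UNIV_gen: "finite (UNIV :: gen set)"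
proof -
  have "UNIV = {GA, GAinv, GT, GTinv}"
    using gen.exhaust by auto
  then show ?thesis
    by (metis finite.emptyI finite_insert)
qed

lemma run_append: "run delta p u s \<Longrightarrow> run delta s w r \<Longrightarrow> run delta p (u @ w) r"
  by (induction rule: run.induct) (auto intro: run.intros)

lemma run_Cons_source: "run delta s (x # w) p \<Longrightarrow> s \<in> fst ` delta"
  by (cases rule: run.cases) force+

definition split_states :: "(nat \<times> gen \<times> nat) set \<Rightarrow> nat \<Rightarrow> gen list \<Rightarrow> nat \<Rightarrow> nat set" where
  "split_states delta p w p' =
     {s. \<exists>u x. w = u @ x \<and> x \<noteq> [] \<and> run delta p u s \<and> run delta s x p'}"

lemma split_states_subset: "split_states delta p w p' \<subseteq> fst ` delta"
  unfolding split_states_def using run_Cons_source by (fastforce simp: neq_Nil_conv)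

lemma run_loop_or_length_le_split_states:
  assumes "run delta p w p'" "finite delta"
  shows "(\<exists>u v x s. w = u @ v @ x \<and> v \<noteq> [] \<and>
            run delta p u s \<and> run delta s v s \<and> run delta s x p')
         \<or> length w \<le> card (split_states delta p w p')"
  using assms(1)
proof (induction rule: run.induct)
  case (run_nil p)
  then show ?case by simp
next
  case (run_cons p x p1 w p2)
  let ?loop = "\<lambda>w p. \<exists>u v y s. w = u @ v @ y \<and> v \<noteq> [] \<and>
                 run delta p u s \<and> run delta s v s \<and> run delta s y p2"
  let ?P1 = "split_states delta p1 w p2" and ?P = "split_states delta p (x # w) p2"
  have step: "run delta p (x # u) s" if "run delta p1 u s" for u s
    using run_cons.hyps(1) that by (rule run.run_cons)
  consider "?loop w p1" | "p \<in> ?P1" | "length w \<le> card ?P1" "p \<notin> ?P1"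
    using run_cons.IH by blast
  then show ?case
  proof cases
    case 1
    then obtain u v y s where "w = u @ v @ y" "v \<noteq> []"
      "run delta p1 u s" "run delta s v s" "run delta s y p2"
      by blast
    then have "x # w = (x # u) @ v @ y" "run delta p (x # u) s"
      using step by simp_all
    then show ?thesis
      using \<open>v \<noteq> []\<close> \<open>run delta s v s\<close> \<open>run delta s y p2\<close> by blast
  next
    case 2
    then obtain u y where "w = u @ y" "run delta p1 u p" "run delta p y p2"
      unfolding split_states_def by blast
    then have "x # w = [] @ (x # u) @ y" "run delta p (x # u) p"
      using step by simp_all
    then show ?thesis
      using run.run_nil \<open>run delta p y p2\<close> by blast
  next
    case 3
    have "p \<in> ?P"
      unfolding split_states_def using run.run_nil run.run_cons[OF run_cons.hyps] by fastforce
    moreover have "s \<in> ?P" if "s \<in> ?P1" for s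
    proof -
      from that obtain u y where "w = u @ y" "y \<noteq> []" "run delta p1 u s" "run delta s y p2"
        unfolding split_states_def by blast
      then have "x # w = (x # u) @ y" "run delta p (x # u) s"
        using step by simp_all
      then show ?thesis
        unfolding split_states_def using \<open>y \<noteq> []\<close> \<open>run delta s y p2\<close> by blast
    qed
    ultimately have "insert p ?P1 \<subseteq> ?P"
      by blast
    moreover have "finite ?P"
      using split_states_subset assms(2) by (metis finite_imageI finite_subset)
    ultimately have "card (insert p ?P1) \<le> card ?P" "finite ?P1"
      by (auto intro: card_mono finite_subset)
    then show ?thesis
      using 3 by simp
  qed
qed

lemma run_pumping:
  assumes "run delta p w p'" "finite delta" "card (fst ` delta) < length w"
  shows "\<exists>u v x s. w = u @ v @ x \<and> v \<noteq> [] \<and>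
           run delta p u s \<and> run delta s v s \<and> run delta s x p'"
proof -
  have "card (split_states delta p w p') \<le> card (fst ` delta)"
    using split_states_subset assms(2) by (intro card_mono) auto
  then have "\<not> length w \<le> card (split_states delta p w p')"
    using assms(3) by linarith
  then show ?thesis
    using run_loop_or_length_le_split_states[OF assms(1,2)] by blast
qed

lemma run_short_representative:
  assumes "finite delta" "run delta p w p'"
    and collapse: "\<And>u v x. run delta p (u @ x) p' \<Longrightarrow> run delta p (u @ v @ x) p' \<Longrightarrow>
                    run delta p (u @ v @ v @ x) p' \<Longrightarrow> f (u @ v @ x) = f (u @ x)"
  shows "\<exists>w'. run delta p w' p' \<and> length w' \<le> card (fst ` delta) \<and> f w' = f w"
  using assms(2)
proof (induction "length w" arbitrary: w rule: less_induct)
  case less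
  show ?case
  proof (cases "length w \<le> card (fst ` delta)")
    case True
    then show ?thesis using less.prems by blast
  next
    case False
    then obtain u v x s where w: "w = u @ v @ x" "v \<noteq> []"
      and runs: "run delta p u s" "run delta s v s" "run delta s x p'"
      using run_pumping[OF less.prems assms(1)] by auto
    have "run delta p (u @ x) p'" "run delta p (u @ v @ v @ x) p'"
      using runs by (auto intro: run_append)
    then have "f w = f (u @ x)"
      using collapse less.prems w(1) by blast
    moreover have "length (u @ x) < length w"
      using w by simp
    ultimately show ?thesis
      using less.hyps \<open>run delta p (u @ x) p'\<close> by metis
  qed
qed

lemma rational_subset_finite:
  assumes "rational_subset q R"
    and collapse: "\<And>u v x. word_eval q (u @ x) \<in> R \<Longrightarrow> word_eval q (u @ v @ x) \<in> R \<Longrightarrow>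
                    word_eval q (u @ v @ v @ x) \<in> R \<Longrightarrow> word_eval q (u @ v @ x) = word_eval q (u @ x)"
  shows "finite R"
proof -
  obtain delta I F where "finite delta"
    and R: "R = {word_eval q w | w. \<exists>i\<in>I. \<exists>f\<in>F. run delta i w f}"
    using assms(1) unfolding rational_subset_def by blast
  have "R \<subseteq> word_eval q ` {w. set w \<subseteq> UNIV \<and> length w \<le> card (fst ` delta)}"
  proof
    fix g assume "g \<in> R"
    then obtain w i f where "i \<in> I" "f \<in> F" "run delta i w f" "g = word_eval q w"
      using R by blast
    moreover have "word_eval q (u @ v @ x) = word_eval q (u @ x)"
      if "run delta i (u @ x) f" "run delta i (u @ v @ x) f" "run delta i (u @ v @ v @ x) f"
      for u v x
      using that collapse R \<open>i \<in> I\<close> \<open>f \<in> F\<close> by blast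
    ultimately obtain w' where "length w' \<le> card (fst ` delta)" "g = word_eval q w'"
      using run_short_representative[OF \<open>finite delta\<close>, of i w f "word_eval q"] by metis
    then show "g \<in> word_eval q ` {w. set w \<subseteq> UNIV \<and> length w \<le> card (fst ` delta)}"
      by blast
  qed
  then show ?thesis
    using finite_lists_length_le[OF finite_UNIV_gen] finite_subset by blast
qed

lemma power_sum_eq_double_power_imp_eq:
  fixes Q :: "'a :: linordered_field"
  assumes "Q \<ge> 2" "Q ^ a + Q ^ c = 2 * Q ^ b"
  shows "a = c"
proof -
  have less_impossible: False if "Q ^ a + Q ^ c = 2 * Q ^ b" "a < c" for a c
  proof -
    have "Q ^ a < Q ^ c"
      using that(2) assms(1) by (simp add: power_strict_increasing)
    then have "b < c"
      using that(1) assms(1) power_less_imp_less_exp[of Q b c] by linarith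
    then have "2 * Q ^ b \<le> Q * Q ^ (c - 1)"
      using assms(1) by (intro mult_mono power_increasing) auto
    also have "\<dots> = Q ^ c"
      using \<open>b < c\<close> by (simp flip: power_Suc)
    finally have "2 * Q ^ b \<le> Q ^ c" .
    moreover have "0 < Q ^ a"
      using assms(1) by simp
    ultimately show False
      using that(1) by linarith
  qed
  show ?thesis
    using less_impossible[of a c] less_impossible[of c a] assms(2)
    by (metis add.commute linorder_neqE_nat)
qed

definition a_to_q_powers :: "int \<Rightarrow> (rat \<times> int) set" where
  "a_to_q_powers q = {(of_int q ^ n, 0) | n. True}"

lemma a_to_q_powers_infinite:
  assumes "q \<ge> 2"
  shows "infinite (a_to_q_powers q)"
proof -
  have "inj (\<lambda>n. ((of_int q :: rat) ^ n, 0 :: int))"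
    using assms by (intro injI) simp
  moreover have "a_to_q_powers q = range (\<lambda>n. ((of_int q :: rat) ^ n, 0 :: int))"
    unfolding a_to_q_powers_def by auto
  ultimately show ?thesis
    using finite_imageD by fastforce
qed

lemma a_to_q_powers_progression:
  assumes "q \<ge> 2"
    and "bs_mult q g h \<in> a_to_q_powers q"
    and "bs_mult q g (bs_mult q y h) \<in> a_to_q_powers q"
    and "bs_mult q g (bs_mult q y (bs_mult q y h)) \<in> a_to_q_powers q"
  shows "y = (0, 0)"
proof -
  obtain g1 g2 y1 y2 h1 h2 where parts: "g = (g1, g2)" "y = (y1, y2)" "h = (h1, h2)"
    by (cases g, cases y, cases h) auto
  define Q :: rat where "Q = of_int q"
  obtain a b c where
    a: "g1 + Q powi g2 * h1 = Q ^ a" "g2 + h2 = 0" and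
    b: "g1 + Q powi g2 * (y1 + Q powi y2 * h1) = Q ^ b" "g2 + (y2 + h2) = 0" and
    c: "g1 + Q powi g2 * (y1 + Q powi y2 * (y1 + Q powi y2 * h1)) = Q ^ c"
    using assms(2-4) unfolding a_to_q_powers_def bs_mult_def parts Q_def by auto
  have "y2 = 0"
    using a(2) b(2) by simp
  then have "Q ^ a + Q ^ c = 2 * Q ^ b" and "Q ^ c = Q ^ a + 2 * (Q powi g2 * y1)"
    using a(1) b(1) c by (simp_all flip: a(1) b(1) c add: algebra_simps)
  moreover have "Q \<ge> 2"
    using assms(1) unfolding Q_def by simp
  ultimately have "Q powi g2 * y1 = 0"
    using power_sum_eq_double_power_imp_eq by fastforce
  then show ?thesis
    using \<open>Q \<ge> 2\<close> \<open>y2 = 0\<close> parts(2) by simp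
qed

lemma a_to_q_powers_not_rational:
  assumes "q \<ge> 2"
  shows "\<not> rational_subset q (a_to_q_powers q)"
proof
  assume "rational_subset q (a_to_q_powers q)"
  moreover have "word_eval q (u @ v @ x) = word_eval q (u @ x)"
    if "word_eval q (u @ x) \<in> a_to_q_powers q" "word_eval q (u @ v @ x) \<in> a_to_q_powers q"
      "word_eval q (u @ v @ v @ x) \<in> a_to_q_powers q" for u v x
  proof -
    have "q \<noteq> 0"
      using assms by simp
    then have "word_eval q v = (0, 0)"
      using a_to_q_powers_progression[OF assms] that by (simp add: word_eval_append)
    then show ?thesis
      using \<open>q \<noteq> 0\<close> by (simp add: word_eval_append)
  qed
  ultimately have "finite (a_to_q_powers q)"
    by (rule rational_subset_finite)
  then show False
    using a_to_q_powers_infinite[OF assms] by contradiction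
qed

definition tat_automaton :: "(nat \<times> gen \<times> nat) set" where
  "tat_automaton = {(0, GT, 0), (0, GA, 1), (1, GTinv, 1)}"

definition a_automaton :: "(nat \<times> gen \<times> nat) set" where
  "a_automaton = {(0, GA, 0)}"

lemma run_tat_automaton_from_1:
  "run tat_automaton p w p' \<Longrightarrow> p = 1 \<Longrightarrow> w = replicate (length w) GTinv"
  by (induction rule: run.induct) (auto simp: tat_automaton_def)

lemma run_tat_automaton_0_1_iff:
  "run tat_automaton 0 w 1 \<longleftrightarrow> (\<exists>n m. w = replicate n GT @ GA # replicate m GTinv)"
proof
  have "run tat_automaton p w p' \<Longrightarrow> p = 0 \<Longrightarrow> p' = 1 \<Longrightarrow>
        \<exists>n m. w = replicate n GT @ GA # replicate m GTinv" for p p'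
  proof (induction rule: run.induct)
    case (run_cons p x p1 w p2)
    then consider "x = GT" "p1 = 0" | "x = GA" "p1 = 1"
      by (auto simp: tat_automaton_def)
    then show ?case
    proof cases
      case 1
      then obtain n m where "w = replicate n GT @ GA # replicate m GTinv"
        using run_cons by auto
      then show ?thesis
        using 1 by (metis append_Cons replicate_Suc)
    next
      case 2
      then show ?thesis
        using run_tat_automaton_from_1[OF run_cons.hyps(2)] by (metis append_Nil replicate_0)
    qed
  qed simp
  then show "run tat_automaton 0 w 1 \<Longrightarrow> \<exists>n m. w = replicate n GT @ GA # replicate m GTinv"
    by blast
next
  have GT: "run tat_automaton 0 (replicate n GT) 0" for n
    by (induction n) (auto intro: run.intros simp: tat_automaton_def)
  have GTinv: "run tat_automaton 1 (replicate m GTinv) 1" for m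
    by (induction m) (auto intro: run.intros simp: tat_automaton_def)
  have "run tat_automaton 0 (GA # replicate m GTinv) 1" for m
    using GTinv by (auto intro: run.intros simp: tat_automaton_def)
  then show "\<exists>n m. w = replicate n GT @ GA # replicate m GTinv \<Longrightarrow> run tat_automaton 0 w 1"
    using GT run_append by blast
qed

lemma run_a_automaton_iff: "run a_automaton 0 w 0 \<longleftrightarrow> (\<exists>k. w = replicate k GA)"
proof
  have "run a_automaton p w p' \<Longrightarrow> w = replicate (length w) GA" for p p'
    by (induction rule: run.induct) (auto simp: a_automaton_def)
  then show "run a_automaton 0 w 0 \<Longrightarrow> \<exists>k. w = replicate k GA"
    by blast
  have "run a_automaton 0 (replicate k GA) 0" for k
    by (induction k) (auto intro: run.intros simp: a_automaton_def)
  then show "\<exists>k. w = replicate k GA \<Longrightarrow> run a_automaton 0 w 0"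
    by blast
qed

lemma word_eval_replicate_GT_append:
  "word_eval q (replicate n GT @ w) =
     (of_int q ^ n * fst (word_eval q w), int n + snd (word_eval q w))"
  by (induction n) (auto simp: bs_mult_def algebra_simps)

lemma word_eval_replicate_GTinv: "word_eval q (replicate n GTinv) = (0, - int n)"
  by (induction n) (auto simp: bs_mult_def)

lemma word_eval_replicate_GA: "word_eval q (replicate n GA) = (of_nat n, 0)"
  by (induction n) (auto simp: bs_mult_def)

lemma rational_subset_run_image:
  assumes "finite delta"
  shows "rational_subset q (word_eval q ` {w. run delta i w f})"
  unfolding rational_subset_def using assms
  by (intro exI[of _ delta] exI[of _ "{i}"] exI[of _ "{f}"]) blast

lemma word_eval_tat_word:
  "word_eval q (replicate n GT @ GA # replicate m GTinv) = (of_int q ^ n, int n - int m)"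
  by (simp add: word_eval_replicate_GT_append word_eval_replicate_GTinv bs_mult_def)

lemma rational_subset_tat:
  "rational_subset q {(of_int q ^ n, int n - int m) | n m. True}"
proof -
  have "word_eval q ` {w. run tat_automaton 0 w 1}
        = {(of_int q ^ n, int n - int m) | n m. True}"
    unfolding run_tat_automaton_0_1_iff by (auto simp flip: word_eval_tat_word)
  moreover have "finite tat_automaton"
    by (simp add: tat_automaton_def)
  ultimately show ?thesis
    using rational_subset_run_image by metis
qed

lemma rational_subset_a_powers: "rational_subset q {(of_nat k, 0) | k. True}"
proof -
  have "word_eval q ` {w. run a_automaton 0 w 0} = {(of_nat k, 0) | k. True}"
    unfolding run_a_automaton_iff
    by (auto simp: word_eval_replicate_GA image_iff) (metis word_eval_replicate_GA)
  moreover have "finite a_automaton"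
    by (simp add: a_automaton_def)
  ultimately show ?thesis
    using rational_subset_run_image by metis
qed

lemma tat_inter_a_powers:
  assumes "q \<ge> 0"
  shows "{(of_int q ^ n, int n - int m) | n m. True} \<inter> {(of_nat k, 0) | k. True} = a_to_q_powers q"
proof -
  have "(of_int q ^ n :: rat) = of_nat (nat (q ^ n))" for n
    using assms by simp
  then show ?thesis
    unfolding a_to_q_powers_def by fastforce
qed

lemma Ints_times_UNIV_subset_BS_carrier: "\<int> \<times> UNIV \<subseteq> BS_carrier q"
  unfolding BS_carrier_def Zq_def by (auto intro: exI[of _ 0])

theorem mainTheorem4:
  fixes q :: int
  assumes "q \<ge> 2"
  shows "\<exists>R1 R2. R1 \<subseteq> BS_carrier q \<and> R2 \<subseteq> BS_carrier q \<and>
           rational_subset q R1 \<and> rational_subset q R2 \<and>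
           \<not> rational_subset q (R1 \<inter> R2)"
proof -
  let ?R1 = "{(of_int q ^ n, int n - int m) | n m. True}"
  let ?R2 = "{(of_nat k, 0) | k. True}"
  have "?R1 \<subseteq> \<int> \<times> UNIV" "?R2 \<subseteq> \<int> \<times> UNIV"
    by (auto intro: Ints_power)
  then have "?R1 \<subseteq> BS_carrier q" "?R2 \<subseteq> BS_carrier q"
    using Ints_times_UNIV_subset_BS_carrier by (blast intro: subset_trans)+
  moreover have "\<not> rational_subset q (?R1 \<inter> ?R2)"
    using tat_inter_a_powers a_to_q_powers_not_rational assms by simp
  ultimately show ?thesis
    using rational_subset_tat rational_subset_a_powers by (intro exI[of _ ?R1] exI[of _ ?R2]) simp
qed

end
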